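(* Let $V$ be a nonempty finite set, $C$ a partition of $V$, $k>0$, $G=(V,E)$ the clique graph of $C$ with edge weight $k$, and $0<\beta<1$. Let $\epsilon=\min(\beta,1-\beta,1/|V|)/2$. Then for a clustering $D$ of $V$: if $D=C$ then $\sum_{d\in D}\left(\frac{w_d}{v_d}-\beta\right)=(1-\beta)|C|$, while if $D\neq C$ then $\sum_{d\in D}\left(\frac{w_d}{v_d}-\beta\right)<(1-\beta)|C|-\epsilon$.
   Context: A clustering of $V$ is a partition of $V$ into nonempty pairwise disjoint sets. The clique graph of a partition $C$ of $V$ with edge weight $k$ is $G=(V,E)$ with $E(i,j)=k$ if $i$ and $j$ lie in the same block of $C$ (including $i=j$) and $E(i,j)=0$ otherwise. For $d\subseteq V$: $v_d=\sum_{i\in d}\sum_{j\in V}E(i,j)$ and $w_d=\sum_{i,j\in d}E(i,j)$. *)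

theory Defs
  imports Main "HOL-Library.Disjoint_Sets" Complex_Main
begin

definition clustering :: "'a set \<Rightarrow> 'a set set \<Rightarrow> bool" where
  "clustering V C \<longleftrightarrow> (\<forall>c\<in>C. c \<noteq> {}) \<and> disjoint C \<and> \<Union>C = V"

definition clique_graph :: "'a set set \<Rightarrow> real \<Rightarrow> 'a \<Rightarrow> 'a \<Rightarrow> real" where
  "clique_graph C k i j = (if \<exists>c\<in>C. i \<in> c \<and> j \<in> c then k else 0)"

definition vol :: "'a set \<Rightarrow> ('a \<Rightarrow> 'a \<Rightarrow> real) \<Rightarrow> 'a set \<Rightarrow> real" where
  "vol V E d = (\<Sum>i\<in>d. \<Sum>j\<in>V. E i j)"

definition inw :: "('a \<Rightarrow> 'a \<Rightarrow> real) \<Rightarrow> 'a set \<Rightarrow> real" where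
  "inw E d = (\<Sum>i\<in>d. \<Sum>j\<in>d. E i j)"

end

theory Submission
  imports Defs
begin

(*
  In the clique graph of C a cluster d has w_d = k \<Sum>_c |d \<inter> c|^2 and v_d = k \<Sum>_c |d \<inter> c| |c|,
  so w_d / v_d is a weighted mean of the covered fractions |d \<inter> c| / |c| and is bounded by
  their maximum. Hence it is at most 1 and at most the sum of the covered fractions; when d
  meets two blocks, the sum also contains a second fraction of size at least 1/|V|.
  The covered fractions of all clusters of D add up to |C|, so \<Sum>_d w_d / v_d is at most
  min |D| |C|, with equality |C| for D = C. If |D| > |C| or |D| < |C|, subtracting \<beta> |D| loses
  at least \<beta> or 1 - \<beta>; if |D| = |C| and D \<noteq> C, then D does not refine C, some cluster meets
  two blocks, and 1/|V| is lost.
*)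

lemma clustering_iff_partition_on: "clustering V C \<longleftrightarrow> partition_on V C"
  by (auto simp: clustering_def partition_on_def)

lemma sum_card_Int_partition:
  assumes "finite A" "partition_on A P"
  shows "(\<Sum>p\<in>P. card (p \<inter> B)) = card (A \<inter> B)"
proof -
  have "card (A \<inter> B) = (\<Sum>x\<in>A. of_bool (x \<in> B))"
    using assms(1) by (simp add: Int_def)
  also have "\<dots> = (\<Sum>p\<in>P. \<Sum>x\<in>p. of_bool (x \<in> B))"
    using assms by (rule sum.partition)
  also have "\<dots> = (\<Sum>p\<in>P. card (p \<inter> B))"
  proof (rule sum.cong[OF refl])
    fix p assume "p \<in> P"
    then have "finite p"
      using assms by (metis Union_upper finite_subset partition_onD1)
    then show "(\<Sum>x\<in>p. of_bool (x \<in> B)) = card (p \<inter> B)"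
      by (simp add: Int_def)
  qed
  finally show ?thesis ..
qed

lemma refines_card_eq_imp_eq:
  assumes "refines A P Q" "finite A" "card P = card Q"
  shows "P = Q"
proof -
  have P: "partition_on A P" and Q: "partition_on A Q" and sub: "\<And>p. p \<in> P \<Longrightarrow> \<exists>q\<in>Q. p \<subseteq> q"
    using assms(1) by (auto simp: refines_def)
  have fin: "finite P" "finite Q"
    using assms(2) P Q by (auto intro: finite_elements)
  define f where "f p = (SOME q. q \<in> Q \<and> p \<subseteq> q)" for p
  have f: "f p \<in> Q" "p \<subseteq> f p" if "p \<in> P" for p
    using someI_ex[of "\<lambda>q. q \<in> Q \<and> p \<subseteq> q"] sub[OF that] by (auto simp: f_def)
  have f_eq: "f p = q" if "p \<in> P" "q \<in> Q" "x \<in> p" "x \<in> q" for p q x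
    using f[OF that(1)] that Q by (auto simp: partition_on_def disjoint_def)
  have "f ` P = Q"
  proof (intro equalityI subsetI)
    fix q assume "q \<in> Q"
    then obtain x where "x \<in> q" using Q by (metis all_not_in_conv partition_onD3)
    then obtain p where "p \<in> P" "x \<in> p" using \<open>q \<in> Q\<close> P Q by (auto simp: partition_on_def)
    with f_eq \<open>q \<in> Q\<close> \<open>x \<in> q\<close> show "q \<in> f ` P" by (metis image_eqI)
  qed (use f in auto)
  then have inj: "inj_on f P"
    using fin assms(3) by (intro eq_card_imp_inj_on) auto
  have "Q \<subseteq> P"
  proof
    fix q assume "q \<in> Q"
    then obtain p where p: "p \<in> P" "f p = q" using \<open>f ` P = Q\<close> by blast
    have "q \<subseteq> p"
    proof
      fix x assume "x \<in> q"
      then obtain p' where "p' \<in> P" "x \<in> p'" using \<open>q \<in> Q\<close> P Q by (auto simp: partition_on_def)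
      then have "f p' = f p" using f_eq \<open>q \<in> Q\<close> \<open>x \<in> q\<close> p by metis
      with inj show "x \<in> p" using \<open>p' \<in> P\<close> \<open>x \<in> p'\<close> p(1) by (metis inj_onD)
    qed
    with f(2)[OF p(1)] p show "q \<in> P" by auto
  qed
  then show ?thesis
    using fin assms(3) by (metis card_subset_eq)
qed

lemma clique_graph_eq_sum:
  assumes "finite C" "disjoint C"
  shows "clique_graph C k i j = k * (\<Sum>c\<in>C. of_bool (i \<in> c) * of_bool (j \<in> c))"
proof (cases "\<exists>c\<in>C. i \<in> c \<and> j \<in> c")
  case True
  then obtain c where c: "c \<in> C" "i \<in> c" "j \<in> c" by blast
  then have "C \<inter> {c'. i \<in> c' \<and> j \<in> c'} = {c}"
    using assms(2) by (auto simp: disjoint_def)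
  with True assms(1) show ?thesis
    by (simp add: clique_graph_def of_bool_conj[symmetric] del: of_bool_conj)
next
  case False
  then show ?thesis
    by (auto simp: clique_graph_def intro!: sum.neutral)
qed

lemma sum_sum_clique_graph:
  assumes "finite C" "disjoint C" "finite A" "finite B"
  shows "(\<Sum>i\<in>A. \<Sum>j\<in>B. clique_graph C k i j)
    = k * (\<Sum>c\<in>C. real (card (A \<inter> c)) * real (card (B \<inter> c)))"
proof -
  have "(\<Sum>i\<in>A. \<Sum>j\<in>B. clique_graph C k i j)
      = k * (\<Sum>i\<in>A. \<Sum>j\<in>B. \<Sum>c\<in>C. of_bool (i \<in> c) * of_bool (j \<in> c))"
    by (simp add: clique_graph_eq_sum[OF assms(1,2)] sum_distrib_left)
  also have "\<dots> = k * (\<Sum>c\<in>C. \<Sum>i\<in>A. \<Sum>j\<in>B. of_bool (i \<in> c) * of_bool (j \<in> c))"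
    by (subst sum.swap) (simp only: sum.swap[of _ B])
  also have "\<dots> = k * (\<Sum>c\<in>C. real (card (A \<inter> c)) * real (card (B \<inter> c)))"
    unfolding sum_product[symmetric] using assms(3,4) by (simp add: Int_def)
  finally show ?thesis .
qed

lemma weighted_mean_le:
  fixes w r :: "'i \<Rightarrow> real"
  assumes "\<And>i. i \<in> I \<Longrightarrow> 0 \<le> w i" "\<And>i. i \<in> I \<Longrightarrow> r i \<le> M" "0 \<le> M"
  shows "(\<Sum>i\<in>I. w i * r i) / (\<Sum>i\<in>I. w i) \<le> M"
proof -
  have "(\<Sum>i\<in>I. w i * r i) \<le> M * (\<Sum>i\<in>I. w i)"
    unfolding sum_distrib_left using assms(1,2) by (intro sum_mono) (simp add: mult_right_mono mult.commute)
  moreover have "0 \<le> (\<Sum>i\<in>I. w i)"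
    using assms(1) by (rule sum_nonneg)
  ultimately show ?thesis
    using assms(3) by (cases "(\<Sum>i\<in>I. w i) = 0") (simp_all add: divide_le_eq)
qed

lemma Max_add_min_le_sum:
  fixes r :: "'i \<Rightarrow> 'b::linordered_ab_group_add"
  assumes "finite I" "\<And>i. i \<in> I \<Longrightarrow> 0 \<le> r i" "i \<in> I" "j \<in> I" "i \<noteq> j"
  shows "Max (r ` I) + min (r i) (r j) \<le> sum r I"
proof -
  obtain m where m: "m \<in> I" "Max (r ` I) = r m"
    using Max_in[of "r ` I"] assms(1,3) by blast
  obtain l where l: "l \<in> {i, j}" "l \<noteq> m"
    using assms(5) by blast
  have "Max (r ` I) + min (r i) (r j) \<le> r m + r l"
    using l m by auto
  also have "\<dots> = sum r {m, l}"
    using l by simp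
  also have "\<dots> \<le> sum r I"
    using assms l m by (intro sum_mono2) auto
  finally show ?thesis .
qed

lemma sum_sq_div_le_Max:
  fixes x n :: "'i \<Rightarrow> real"
  assumes "finite I" "I \<noteq> {}" "\<And>i. i \<in> I \<Longrightarrow> 0 \<le> x i" "\<And>i. i \<in> I \<Longrightarrow> 0 < n i"
  shows "(\<Sum>i\<in>I. x i ^ 2) / (\<Sum>i\<in>I. x i * n i) \<le> Max ((\<lambda>i. x i / n i) ` I)"
proof -
  have "(\<Sum>i\<in>I. x i ^ 2) = (\<Sum>i\<in>I. (x i * n i) * (x i / n i))"
  proof (rule sum.cong[OF refl])
    fix i assume "i \<in> I"
    with assms(4) have "n i \<noteq> 0" by fastforce
    then show "x i ^ 2 = (x i * n i) * (x i / n i)" by (simp add: power2_eq_square)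
  qed
  moreover obtain i where "i \<in> I" using assms(2) by blast
  then have "0 \<le> Max ((\<lambda>i. x i / n i) ` I)"
    using assms by (meson Max_ge divide_nonneg_pos finite_imageI image_eqI order_trans)
  moreover have "(\<Sum>i\<in>I. (x i * n i) * (x i / n i)) / (\<Sum>i\<in>I. x i * n i)
      \<le> Max ((\<lambda>i. x i / n i) ` I)"
    by (rule weighted_mean_le) (use assms \<open>0 \<le> Max _\<close> in \<open>auto intro: mult_nonneg_nonneg less_imp_le\<close>)
  ultimately show ?thesis
    by simp
qed

definition covered_fraction :: "'a set \<Rightarrow> 'a set \<Rightarrow> real" where
  "covered_fraction d c = real (card (d \<inter> c)) / real (card c)"

lemma covered_fraction_nonneg: "0 \<le> covered_fraction d c"
  by (simp add: covered_fraction_def)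

lemma covered_fraction_le_one: "finite c \<Longrightarrow> covered_fraction d c \<le> 1"
  using card_mono[of c "d \<inter> c"] by (auto simp: covered_fraction_def divide_le_eq_1)

lemma sum_covered_fraction:
  assumes "finite V" "partition_on V C" "partition_on V D"
  shows "(\<Sum>d\<in>D. \<Sum>c\<in>C. covered_fraction d c) = real (card C)"
proof -
  have "(\<Sum>d\<in>D. \<Sum>c\<in>C. covered_fraction d c) = (\<Sum>c\<in>C. real (\<Sum>d\<in>D. card (d \<inter> c)) / real (card c))"
    by (subst sum.swap) (simp add: covered_fraction_def sum_divide_distrib)
  also have "\<dots> = (\<Sum>c\<in>C. 1)"
  proof (rule sum.cong[OF refl])
    fix c assume "c \<in> C"
    with assms have "V \<inter> c = c" "finite c" "c \<noteq> {}"
      by (auto simp: partition_on_def intro: finite_subset)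
    then show "real (\<Sum>d\<in>D. card (d \<inter> c)) / real (card c) = 1"
      using sum_card_Int_partition[OF assms(1,3)] by simp
  qed
  finally show ?thesis by simp
qed

locale clique_clustering =
  fixes V :: "'a set" and C :: "'a set set" and k :: real
  assumes finite_V: "finite V" and partition_C: "partition_on V C" and k_pos: "0 < k"
begin

abbreviation E :: "'a \<Rightarrow> 'a \<Rightarrow> real" where
  "E \<equiv> clique_graph C k"

abbreviation density :: "'a set \<Rightarrow> real" where
  "density d \<equiv> inw E d / vol V E d"

lemma finite_C: "finite C"
  using finite_V partition_C by (rule finite_elements)

lemma finite_block: "c \<in> C \<Longrightarrow> finite c"
  using finite_V partition_C by (metis Union_upper finite_subset partition_onD1)

lemma inw_clique_graph: "finite d \<Longrightarrow> inw E d = k * (\<Sum>c\<in>C. real (card (d \<inter> c)) ^ 2)"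
  using sum_sum_clique_graph[OF finite_C partition_onD2[OF partition_C]]
  by (simp add: inw_def power2_eq_square)

lemma vol_clique_graph: "d \<subseteq> V \<Longrightarrow> vol V E d = k * (\<Sum>c\<in>C. real (card (d \<inter> c)) * real (card c))"
  using sum_sum_clique_graph[OF finite_C partition_onD2[OF partition_C] finite_subset[OF _ finite_V] finite_V]
    partition_onD1[OF partition_C]
  by (simp add: vol_def Int_absorb1 Union_upper)

lemma density_le_Max:
  assumes "d \<subseteq> V" "d \<noteq> {}"
  shows "density d \<le> Max (covered_fraction d ` C)"
proof -
  have "C \<noteq> {}"
    using assms partition_onD1[OF partition_C] by auto
  have card_pos: "0 < card c" if "c \<in> C" for c
    using that finite_block partition_onD3[OF partition_C] by (auto simp: card_gt_0_iff)
  have "density d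
      = (\<Sum>c\<in>C. real (card (d \<inter> c)) ^ 2) / (\<Sum>c\<in>C. real (card (d \<inter> c)) * real (card c))"
    using assms(1) k_pos by (simp add: inw_clique_graph vol_clique_graph finite_subset[OF _ finite_V])
  also have "\<dots> \<le> Max ((\<lambda>c. real (card (d \<inter> c)) / real (card c)) ` C)"
    using finite_C \<open>C \<noteq> {}\<close> card_pos by (intro sum_sq_div_le_Max) auto
  finally show ?thesis
    by (simp add: covered_fraction_def[abs_def])
qed

lemma density_le_one:
  assumes "d \<subseteq> V" "d \<noteq> {}"
  shows "density d \<le> 1"
proof -
  have "C \<noteq> {}"
    using assms partition_onD1[OF partition_C] by auto
  then have "Max (covered_fraction d ` C) \<le> 1"
    using finite_C by (simp add: finite_block covered_fraction_le_one)
  with density_le_Max[OF assms] show ?thesis by linarith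
qed

lemma density_le_sum_covered_fraction:
  assumes "d \<subseteq> V" "d \<noteq> {}"
  shows "density d \<le> (\<Sum>c\<in>C. covered_fraction d c)"
proof -
  have "C \<noteq> {}"
    using assms partition_onD1[OF partition_C] by auto
  then obtain c where "c \<in> C" "Max (covered_fraction d ` C) = covered_fraction d c"
    using Max_in[of "covered_fraction d ` C"] finite_C by blast
  moreover have "covered_fraction d c \<le> (\<Sum>c\<in>C. covered_fraction d c)" if "c \<in> C" for c
    using that finite_C by (intro member_le_sum covered_fraction_nonneg)
  ultimately show ?thesis
    using density_le_Max[OF assms] by fastforce
qed

lemma inverse_card_le_covered_fraction:
  assumes "c \<in> C" "d \<inter> c \<noteq> {}"
  shows "1 / real (card V) \<le> covered_fraction d c"
proof -
  have "c \<subseteq> V" "finite c"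
    using assms(1) partition_onD1[OF partition_C] finite_block by auto
  then have "0 < card c" "card c \<le> card V" "1 \<le> card (d \<inter> c)"
    using assms finite_V by (auto simp: card_gt_0_iff card_mono Suc_le_eq)
  then have "1 / real (card V) \<le> 1 / real (card c)"
    by (simp add: frac_le)
  also have "\<dots> \<le> covered_fraction d c"
    using \<open>1 \<le> card (d \<inter> c)\<close> by (simp add: covered_fraction_def divide_right_mono)
  finally show ?thesis .
qed

lemma density_le_sum_covered_fraction_if_meets_two:
  assumes "d \<subseteq> V" "c1 \<in> C" "c2 \<in> C" "c1 \<noteq> c2" "d \<inter> c1 \<noteq> {}" "d \<inter> c2 \<noteq> {}"
  shows "density d \<le> (\<Sum>c\<in>C. covered_fraction d c) - 1 / real (card V)"
proof -
  have "1 / real (card V) \<le> min (covered_fraction d c1) (covered_fraction d c2)"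
    using assms inverse_card_le_covered_fraction by simp
  moreover have "Max (covered_fraction d ` C) + min (covered_fraction d c1) (covered_fraction d c2)
      \<le> (\<Sum>c\<in>C. covered_fraction d c)"
    using finite_C covered_fraction_nonneg assms(2-4) by (rule Max_add_min_le_sum)
  moreover have "d \<noteq> {}"
    using assms(5) by blast
  ultimately show ?thesis
    using density_le_Max[OF assms(1)] by linarith
qed

lemma density_block:
  assumes "c \<in> C"
  shows "density c = 1"
proof -
  have same: "real (card (c \<inter> c')) ^ 2 = real (card (c \<inter> c')) * real (card c')" if "c' \<in> C" for c'
  proof -
    have "c' = c \<or> c \<inter> c' = {}"
      using assms that partition_onD2[OF partition_C] by (auto simp: disjoint_def)
    then show ?thesis
      by (elim disjE) (simp_all add: power2_eq_square)
  qed
  have "0 < card c"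
    using assms finite_block partition_onD3[OF partition_C] by (auto simp: card_gt_0_iff)
  then have "0 < (\<Sum>c'\<in>C. real (card (c \<inter> c')) * real (card c'))"
    using finite_C assms by (intro sum_pos2[of _ c]) auto
  moreover have "c \<subseteq> V" "finite c"
    using assms partition_onD1[OF partition_C] finite_block by auto
  ultimately show ?thesis
    using k_pos by (simp add: inw_clique_graph vol_clique_graph same)
qed

lemma sum_density_le_card:
  assumes "partition_on V D"
  shows "(\<Sum>d\<in>D. density d) \<le> real (card C)"
proof -
  have "(\<Sum>d\<in>D. density d) \<le> (\<Sum>d\<in>D. \<Sum>c\<in>C. covered_fraction d c)"
    using assms by (intro sum_mono density_le_sum_covered_fraction) (auto simp: partition_on_def)
  also have "\<dots> = real (card C)"
    using finite_V partition_C assms by (rule sum_covered_fraction)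
  finally show ?thesis .
qed

lemma sum_density_le_card_if_not_refines:
  assumes "partition_on V D" "\<not> refines V D C"
  shows "(\<Sum>d\<in>D. density d) \<le> real (card C) - 1 / real (card V)"
proof -
  have cluster_sub: "d \<subseteq> V" and cluster_ne: "d \<noteq> {}" if "d \<in> D" for d
    using that assms(1) by (auto simp: partition_on_def)
  obtain d where d: "d \<in> D" "\<And>c. c \<in> C \<Longrightarrow> \<not> d \<subseteq> c"
    using assms partition_C unfolding refines_def by blast
  then have "d \<subseteq> \<Union>C"
    using cluster_sub partition_onD1[OF partition_C] by simp
  obtain x where "x \<in> d"
    using cluster_ne d(1) by blast
  then obtain c1 where c1: "c1 \<in> C" "x \<in> c1"
    using \<open>d \<subseteq> \<Union>C\<close> by blast
  then obtain y where y: "y \<in> d" "y \<notin> c1"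
    using d(2) by blast
  then obtain c2 where c2: "c2 \<in> C" "y \<in> c2"
    using \<open>d \<subseteq> \<Union>C\<close> by blast
  have fin_D: "finite D"
    using finite_V assms(1) by (rule finite_elements)
  have "density d \<le> (\<Sum>c\<in>C. covered_fraction d c) - 1 / real (card V)"
  proof (rule density_le_sum_covered_fraction_if_meets_two[OF cluster_sub[OF d(1)] c1(1) c2(1)])
    show "c1 \<noteq> c2" "d \<inter> c1 \<noteq> {}" "d \<inter> c2 \<noteq> {}"
      using \<open>x \<in> d\<close> c1 c2 y by blast+
  qed
  moreover have "(\<Sum>d'\<in>D - {d}. density d') \<le> (\<Sum>d'\<in>D - {d}. \<Sum>c\<in>C. covered_fraction d' c)"
    using cluster_sub cluster_ne by (intro sum_mono density_le_sum_covered_fraction) auto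
  ultimately have "(\<Sum>d\<in>D. density d) \<le> (\<Sum>d\<in>D. \<Sum>c\<in>C. covered_fraction d c) - 1 / real (card V)"
    using sum.remove[OF fin_D d(1), of "\<lambda>d. density d"]
      sum.remove[OF fin_D d(1), of "\<lambda>d. \<Sum>c\<in>C. covered_fraction d c"] by linarith
  also have "\<dots> = real (card C) - 1 / real (card V)"
    using sum_covered_fraction[OF finite_V partition_C assms(1)] by simp
  finally show ?thesis .
qed

lemma sum_density_blocks: "(\<Sum>c\<in>C. density c) = real (card C)"
proof -
  have "(\<Sum>c\<in>C. density c) = (\<Sum>c\<in>C. 1)"
    by (rule sum.cong[OF refl]) (rule density_block)
  then show ?thesis
    by simp
qed

lemma sum_density_le_if_ne:
  assumes "partition_on V D" "D \<noteq> C" "0 < \<beta>" "\<beta> < 1"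
  shows "(\<Sum>d\<in>D. density d) - \<beta> * real (card D)
    \<le> (1 - \<beta>) * real (card C) - min (min \<beta> (1 - \<beta>)) (1 / real (card V))"
proof -
  consider "card C < card D" | "card D < card C" | "card D = card C"
    by linarith
  then show ?thesis
  proof cases
    case 1
    then have "\<beta> * (real (card C) + 1) \<le> \<beta> * real (card D)"
      using assms(3) by (intro mult_left_mono) auto
    then show ?thesis
      using sum_density_le_card[OF assms(1)] by (simp add: algebra_simps min_le_iff_disj)
  next
    case 2
    have "density d \<le> 1" if "d \<in> D" for d
      using that assms(1) density_le_one unfolding partition_on_def by blast
    then have "(\<Sum>d\<in>D. density d) \<le> real (card D)"
      using sum_bounded_above[of D density 1] by simp
    moreover have "(1 - \<beta>) * real (card D) \<le> (1 - \<beta>) * (real (card C) - 1)"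
      using 2 assms(4) by (intro mult_left_mono) auto
    ultimately show ?thesis
      by (simp add: algebra_simps min_le_iff_disj)
  next
    case 3
    then have "\<not> refines V D C"
      using assms(2) refines_card_eq_imp_eq finite_V by blast
    then show ?thesis
      using sum_density_le_card_if_not_refines[OF assms(1)] 3 by (simp add: algebra_simps min_le_iff_disj)
  qed
qed

end

theorem lemma2:
  fixes V :: "'a set" and C D :: "'a set set" and k \<beta> :: real
  assumes "finite V" "V \<noteq> {}"
    and "clustering V C" "k > 0" "0 < \<beta>" "\<beta> < 1"
    and "clustering V D"
  defines "E \<equiv> clique_graph C k"
    and "\<epsilon> \<equiv> min (min \<beta> (1 - \<beta>)) (1 / real (card V)) / 2"
  shows "(D = C \<longrightarrow> (\<Sum>d\<in>D. inw E d / vol V E d - \<beta>) = (1 - \<beta>) * real (card C))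
       \<and> (D \<noteq> C \<longrightarrow> (\<Sum>d\<in>D. inw E d / vol V E d - \<beta>) < (1 - \<beta>) * real (card C) - \<epsilon>)"
proof -
  have C: "partition_on V C" and D: "partition_on V D"
    using assms(3,7) by (simp_all add: clustering_iff_partition_on)
  interpret clique_clustering V C k
    using assms(1,4) C by unfold_locales
  have sum_eq: "(\<Sum>d\<in>D. inw E d / vol V E d - \<beta>) = (\<Sum>d\<in>D. density d) - \<beta> * real (card D)"
    by (simp add: E_def sum_subtractf)
  define m where "m = min (min \<beta> (1 - \<beta>)) (1 / real (card V))"
  have "0 < m"
    using assms(1,2,5,6) by (simp add: m_def card_gt_0_iff)
  then have "\<epsilon> < m"
    unfolding \<epsilon>_def m_def[symmetric] by linarith
  then show ?thesis
    using sum_eq sum_density_blocks sum_density_le_if_ne[OF D _ assms(5,6)] unfolding m_def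
    by (intro conjI impI) (simp add: algebra_simps, linarith)
qed

end
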